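(* Let $b\ge 3$, let $\mathbb R_b$ be a complete system of residues mod $b$ (possibly containing negative integers), and let $D\subset\mathbb R_b$ with $2\le|D|<b$. Suppose $S\subset\mathbb R_b$ is a set of integers with $|S|>1$ and $S-S=\{s-s':s,s'\in S\}\subseteq D$. Then $\mathcal C=\mathcal C_{b,D}$ is van der Corput with power savings of order $c=\frac{\log|S|}{\log b}$, i.e. $T(\mathcal C,N)\ll N^{-c}$; in particular $I(\mathcal C,N)\ll N^{-c}$, i.e. every $A\subset[N]$ with $(A-A)\cap\mathcal C=\emptyset$ satisfies $|A|\ll N^{1-c}$.
   Context: $\mathcal C_{b,D}=\{\sum_{j=0}^{k} d_j b^j : k\in\mathbb N_0,\ d_j\in D\}$. $[N]=\{1,\dots,N\}$. For $H\subset\mathbb Z$: $I(H,N)=\max\{|A|/N: A\subset[N],\ (A-A)\cap H=\emptyset\}$ (differences $a-a'$ with $a\neq a'$); $T(H,N)=\inf a_0$ over all real trigonometric polynomials $T(x)=a_0+\sum_{n<N,\,n\in H} a_n\cos(2\pi n x)$ with $T(0)=1$ and $T(x)\ge 0$ for all $x$. $H$ has power savings of order $c$ in the van der Corput property if $T(H,N)\ll N^{-c}$, and in the intersective property if $I(H,N)\ll N^{-c}$. *)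

theory Defs
  imports Complex_Main
begin

definition complete_residue_system :: "nat \<Rightarrow> int set \<Rightarrow> bool" where
  "complete_residue_system b R \<longleftrightarrow>
     finite R \<and> card R = b \<and> (\<lambda>x. x mod int b) ` R = {0..<int b}"

definition digit_set :: "nat \<Rightarrow> int set \<Rightarrow> int set" where
  "digit_set b D = {(\<Sum>j\<le>k. d j * int b ^ j) | k d. \<forall>j\<le>k. d j \<in> D}"

definition inter_density :: "int set \<Rightarrow> nat \<Rightarrow> real" where
  "inter_density H N = Max ((\<lambda>A. real (card A) / real N) `
      {A. A \<subseteq> {1..int N} \<and> (\<forall>a\<in>A. \<forall>a'\<in>A. a \<noteq> a' \<longrightarrow> a - a' \<notin> H)})"

definition trig_val :: "nat \<Rightarrow> real \<Rightarrow> (int \<Rightarrow> real) \<Rightarrow> real \<Rightarrow> real" where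
  "trig_val N a0 a x = a0 + (\<Sum>n\<in>{-(int N)<..<int N}. a n * cos (2 * pi * real_of_int n * x))"

definition vdc_T :: "int set \<Rightarrow> nat \<Rightarrow> real" where
  "vdc_T H N = Inf {a0. \<exists>a :: int \<Rightarrow> real.
      (\<forall>n. a n \<noteq> 0 \<longrightarrow> n \<in> H \<and> n \<noteq> 0 \<and> \<bar>n\<bar> < int N) \<and>
      trig_val N a0 a 0 = 1 \<and> (\<forall>x. trig_val N a0 a x \<ge> 0)}"

end

theory Submission
  imports Defs "HOL-Library.FuncSet"
begin

(* If P is a finite set of integers of diameter less than N whose nonzero differences lie in H,
   then |sum_{p in P} e(p x)|^2 / |P|^2 is admissible for T(H, N) with constant term 1/|P|, and for
   A in [N] with (A - A) disjoint from H the translates A + p (p in P) are pairwise disjoint inside an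
   interval of length less than 2N; hence T(H, N) <= 1/|P| and I(H, N) <= 2/|P|.
   For H = C_{b,D} take for P the numbers sum_{j<k} s_j b^j with all digits s_j in S: as the
   elements of S are incongruent mod b these are |S|^k distinct numbers, their differences have
   digits in S - S, a subset of D, and choosing b^k comparable to N makes |P| comparable to
   N^(log |S| / log b). *)

lemma sum_cos_multiples_eq_0:
  fixes n :: int and N :: nat
  assumes "\<not> int N dvd n"
  shows "(\<Sum>j<N. cos (2 * pi * real_of_int n * (real j / real N))) = 0"
proof (cases "N = 0")
  case False
  then have N: "N > 0" by simp
  define z where "z = cis (2 * pi * real_of_int n / real N)"
  have "z ^ N = 1"
    using N by (simp add: z_def DeMoivre)
  moreover have "z \<noteq> 1"
  proof
    assume "z = 1"
    then have "cos (2 * pi * real_of_int n / real N) = 1"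
      unfolding z_def by (metis cis.sel(1) one_complex.sel(1))
    then obtain m :: int where "2 * pi * real_of_int n / real N = real_of_int m * 2 * pi"
      by (auto simp: cos_one_2pi_int)
    then have "real_of_int n = real_of_int (m * int N)" using N by (simp add: field_simps)
    then show False using assms by (metis dvd_triv_right of_int_eq_iff)
  qed
  ultimately have "(\<Sum>j<N. z ^ j) = 0" by (simp add: geometric_sum)
  then have "Re (\<Sum>j<N. z ^ j) = 0" by simp
  then show ?thesis by (simp add: z_def DeMoivre mult.commute)
qed simp

lemma sum_trig_val_samples:
  assumes "N \<ge> 1"
  shows "(\<Sum>j<N. trig_val N a0 a (real j / real N)) = real N * (a0 + a 0)"
proof -
  let ?I = "{-(int N)<..<int N}"
  let ?c = "\<lambda>n. \<Sum>j<N. cos (2 * pi * real_of_int n * (real j / real N))"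
  have c: "a n * ?c n = (if n = 0 then a 0 * real N else 0)" if "n \<in> ?I" for n
  proof (cases "n = 0")
    case False
    with that have "\<not> int N dvd n" by (auto dest: dvd_imp_le_int)
    then show ?thesis using False sum_cos_multiples_eq_0 by simp
  qed simp
  have "(\<Sum>j<N. trig_val N a0 a (real j / real N)) = real N * a0 + (\<Sum>n\<in>?I. a n * ?c n)"
    unfolding trig_val_def by (simp add: sum.distrib sum_distrib_left sum.swap[of _ "{..<N}"])
  also have "(\<Sum>n\<in>?I. a n * ?c n) = (\<Sum>n\<in>?I. if n = 0 then a 0 * real N else 0)"
    by (rule sum.cong[OF refl c])
  also have "\<dots> = a 0 * real N"
    using assms by simp
  finally show ?thesis by (simp add: algebra_simps)
qed

lemma trig_val_nonneg_imp_const_nonneg: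
  assumes "a 0 = 0" and "\<forall>x. trig_val N a0 a x \<ge> 0"
  shows "a0 \<ge> 0"
proof (cases "N = 0")
  case True
  then show ?thesis using assms(2) by (simp add: trig_val_def)
next
  case False
  have "0 \<le> (\<Sum>j<N. trig_val N a0 a (real j / real N))"
    using assms(2) by (intro sum_nonneg) auto
  also have "\<dots> = real N * a0"
    using False assms(1) by (simp add: sum_trig_val_samples)
  finally show ?thesis using False by (simp add: zero_le_mult_iff)
qed

definition vdc_admissible :: "int set \<Rightarrow> nat \<Rightarrow> real \<Rightarrow> (int \<Rightarrow> real) \<Rightarrow> bool" where
  "vdc_admissible H N a0 a \<longleftrightarrow>
     (\<forall>n. a n \<noteq> 0 \<longrightarrow> n \<in> H \<and> n \<noteq> 0 \<and> \<bar>n\<bar> < int N) \<and>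
     trig_val N a0 a 0 = 1 \<and> (\<forall>x. trig_val N a0 a x \<ge> 0)"

lemma vdc_T_le_admissible:
  assumes "vdc_admissible H N a0 a"
  shows "vdc_T H N \<le> a0"
proof -
  have "vdc_T H N = Inf {a0. \<exists>a. vdc_admissible H N a0 a}"
    unfolding vdc_T_def vdc_admissible_def ..
  moreover have "bdd_below {a0. \<exists>a. vdc_admissible H N a0 a}"
    by (rule bdd_belowI[of _ 0])
      (auto simp: vdc_admissible_def intro: trig_val_nonneg_imp_const_nonneg)
  ultimately show ?thesis
    using assms by (auto intro: cInf_lower)
qed

definition diff_count :: "int set \<Rightarrow> int \<Rightarrow> nat" where
  "diff_count P n = card {(p, q) \<in> P \<times> P. p - q = n}"

lemma diff_count_0:
  assumes "finite P"
  shows "diff_count P 0 = card P"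
proof -
  have "{(p, q) \<in> P \<times> P. p - q = 0} = (\<lambda>p. (p, p)) ` P" by auto
  then show ?thesis by (simp add: diff_count_def card_image inj_on_def)
qed

lemma sum_diff_count:
  fixes f :: "int \<Rightarrow> 'a::comm_ring_1"
  assumes "finite P" "finite I" "\<forall>p\<in>P. \<forall>q\<in>P. p - q \<in> I"
  shows "(\<Sum>n\<in>I. of_nat (diff_count P n) * f n) = (\<Sum>p\<in>P. \<Sum>q\<in>P. f (p - q))"
proof -
  have "(\<Sum>n\<in>I. of_nat (diff_count P n) * f n)
      = (\<Sum>n\<in>I. \<Sum>pq\<in>{pq \<in> P \<times> P. (\<lambda>(p, q). p - q) pq = n}. f ((\<lambda>(p, q). p - q) pq))"
    unfolding diff_count_def by (intro sum.cong) (auto simp: split_def mem_Times_iff)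
  also have "\<dots> = (\<Sum>pq\<in>P \<times> P. f ((\<lambda>(p, q). p - q) pq))"
    using assms by (intro sum.group) auto
  finally show ?thesis by (simp add: sum.cartesian_product split_def)
qed

lemma sum_sum_cos_diff_nonneg:
  fixes u :: "'a \<Rightarrow> real"
  shows "0 \<le> (\<Sum>p\<in>P. \<Sum>q\<in>P. cos (u p - u q))"
proof -
  have "(\<Sum>p\<in>P. \<Sum>q\<in>P. cos (u p - u q))
      = (\<Sum>p\<in>P. cos (u p))\<^sup>2 + (\<Sum>p\<in>P. sin (u p))\<^sup>2"
    by (simp add: cos_diff sum.distrib sum_product power2_eq_square)
  then show ?thesis by simp
qed

lemma vdc_T_le_inverse_card:
  assumes fin: "finite P" and ne: "P \<noteq> {}"
    and diff: "\<forall>p\<in>P. \<forall>q\<in>P. p \<noteq> q \<longrightarrow> p - q \<in> H"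
    and diam: "\<forall>p\<in>P. \<forall>q\<in>P. \<bar>p - q\<bar> < int N"
  shows "vdc_T H N \<le> 1 / real (card P)"
proof (rule vdc_T_le_admissible)
  define m where "m = real (card P)"
  define a where "a n = (if n = 0 then 0 else real (diff_count P n) / m\<^sup>2)" for n
  let ?I = "{-(int N)<..<int N}"
  have m: "m > 0" using fin ne by (simp add: m_def card_gt_0_iff)
  have "0 \<in> ?I" using ne diam by fastforce
  have diff_I: "\<forall>p\<in>P. \<forall>q\<in>P. p - q \<in> ?I" using diam by fastforce
  have trig: "trig_val N (1 / m) a x = (\<Sum>p\<in>P. \<Sum>q\<in>P. cos (2 * pi * real_of_int (p - q) * x)) / m\<^sup>2" for x
  proof -
    have "trig_val N (1 / m) a x = (\<Sum>n\<in>?I. real (diff_count P n) * cos (2 * pi * real_of_int n * x)) / m\<^sup>2"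
      using \<open>0 \<in> ?I\<close> m
      by (simp add: trig_val_def a_def sum.remove[of ?I 0] diff_count_0[OF fin] m_def
          sum_divide_distrib add_divide_distrib power2_eq_square)
    then show ?thesis using fin diff_I by (simp add: sum_diff_count)
  qed
  show "vdc_admissible H N (1 / real (card P)) a"
    unfolding vdc_admissible_def m_def[symmetric]
  proof (intro conjI allI impI)
    fix n assume "a n \<noteq> 0"
    then have "n \<noteq> 0" and "diff_count P n \<noteq> 0" by (auto simp: a_def split: if_splits)
    then have "{(p, q) \<in> P \<times> P. p - q = n} \<noteq> {}"
      unfolding diff_count_def by (metis card.empty)
    then obtain p q where "p \<in> P" "q \<in> P" "p - q = n" by blast
    then show "n \<in> H" "n \<noteq> 0" "\<bar>n\<bar> < int N" using diff diam \<open>n \<noteq> 0\<close> by auto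
  next
    show "trig_val N (1 / m) a 0 = 1" using m unfolding trig by (simp add: m_def power2_eq_square)
  next
    fix x
    show "trig_val N (1 / m) a x \<ge> 0"
      using sum_sum_cos_diff_nonneg[of "\<lambda>p. 2 * pi * real_of_int p * x" P]
      by (simp add: trig algebra_simps)
  qed
qed

lemma card_mult_card_le_of_difference_free:
  assumes A: "A \<subseteq> {1..int N}" "\<forall>a\<in>A. \<forall>a'\<in>A. a \<noteq> a' \<longrightarrow> a - a' \<notin> H"
    and fin: "finite P" and ne: "P \<noteq> {}"
    and diff: "\<forall>p\<in>P. \<forall>q\<in>P. p \<noteq> q \<longrightarrow> p - q \<in> H"
    and diam: "\<forall>p\<in>P. \<forall>q\<in>P. \<bar>p - q\<bar> < int N"
  shows "card A * card P \<le> 2 * N"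
proof -
  have inj: "inj_on (\<lambda>(a, p). a + p) (A \<times> P)"
  proof (rule inj_onI, clarify)
    fix a p a' p' assume "a \<in> A" "p \<in> P" "a' \<in> A" "p' \<in> P" "a + p = a' + p'"
    moreover have "a - a' = p' - p" using \<open>a + p = a' + p'\<close> by simp
    ultimately show "a = a' \<and> p = p'" using A(2) diff by fastforce
  qed
  have "(\<lambda>(a, p). a + p) ` (A \<times> P) \<subseteq> {Min P + 1 .. Max P + int N}"
  proof clarify
    fix a p assume "a \<in> A" "p \<in> P"
    moreover have "Min P \<le> p" "p \<le> Max P" using \<open>p \<in> P\<close> fin by auto
    ultimately show "a + p \<in> {Min P + 1 .. Max P + int N}" using A(1) by auto
  qed
  then have "card (A \<times> P) \<le> card {Min P + 1 .. Max P + int N}"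
    using card_image[OF inj] by (metis card_mono finite_atLeastAtMost_int)
  moreover have "Max P - Min P < int N"
    using diam Max_in[OF fin ne] Min_in[OF fin ne] by fastforce
  ultimately show ?thesis by (simp add: card_cartesian_product)
qed

lemma inter_density_le_two_div_card:
  assumes "finite P" "P \<noteq> {}"
    and "\<forall>p\<in>P. \<forall>q\<in>P. p \<noteq> q \<longrightarrow> p - q \<in> H"
    and "\<forall>p\<in>P. \<forall>q\<in>P. \<bar>p - q\<bar> < int N"
  shows "inter_density H N \<le> 2 / real (card P)"
  unfolding inter_density_def
proof (subst Max_le_iff, safe)
  fix A assume "A \<subseteq> {1..int N}" "\<forall>a\<in>A. \<forall>a'\<in>A. a \<noteq> a' \<longrightarrow> a - a' \<notin> H"
  then have "real (card A * card P) \<le> real (2 * N)"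
    using assms by (intro of_nat_mono card_mult_card_le_of_difference_free)
  then show "real (card A) / real N \<le> 2 / real (card P)"
    using assms by (simp add: divide_simps card_gt_0_iff mult.commute)
qed (auto intro: finite_subset[of _ "Pow {1..int N}"])

lemma digit_expansion_unique:
  fixes b :: nat and S :: "int set" and \<sigma> \<tau> :: "nat \<Rightarrow> int"
  assumes "b > 0" and res: "inj_on (\<lambda>s. s mod int b) S"
    and "\<forall>j<k. \<sigma> j \<in> S" "\<forall>j<k. \<tau> j \<in> S"
    and "(\<Sum>j<k. \<sigma> j * int b ^ j) = (\<Sum>j<k. \<tau> j * int b ^ j)"
  shows "\<forall>j<k. \<sigma> j = \<tau> j"
  using assms(3-)
proof (induction k arbitrary: \<sigma> \<tau>)
  case (Suc k)
  have split: "(\<Sum>j<Suc k. f j * int b ^ j) = f 0 + int b * (\<Sum>j<k. f (Suc j) * int b ^ j)"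
    for f :: "nat \<Rightarrow> int"
    by (simp only: sum.lessThan_Suc_shift) (simp add: sum_distrib_left algebra_simps)
  from Suc.prems(3) have eq:
    "\<sigma> 0 + int b * (\<Sum>j<k. \<sigma> (Suc j) * int b ^ j) = \<tau> 0 + int b * (\<Sum>j<k. \<tau> (Suc j) * int b ^ j)"
    by (simp only: split)
  then have "\<sigma> 0 mod int b = \<tau> 0 mod int b"
    by (metis mod_mult_self2 mult.commute)
  then have head: "\<sigma> 0 = \<tau> 0"
    using res Suc.prems(1,2) by (auto dest: inj_onD)
  with eq \<open>b > 0\<close> have "(\<Sum>j<k. \<sigma> (Suc j) * int b ^ j) = (\<Sum>j<k. \<tau> (Suc j) * int b ^ j)"
    by simp
  then have "\<forall>j<k. \<sigma> (Suc j) = \<tau> (Suc j)"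
    by (rule Suc.IH[of "\<lambda>j. \<sigma> (Suc j)" "\<lambda>j. \<tau> (Suc j)", rotated 2])
      (use Suc.prems(1,2) in auto)
  with head show ?case by (auto simp: less_Suc_eq_0_disj)
qed simp

definition expansions :: "nat \<Rightarrow> int set \<Rightarrow> nat \<Rightarrow> int set" where
  "expansions b S k = (\<lambda>\<sigma>. \<Sum>j<k. \<sigma> j * int b ^ j) ` ({..<k} \<rightarrow>\<^sub>E S)"

lemma card_expansions:
  assumes "b > 0" "finite S" "inj_on (\<lambda>s. s mod int b) S"
  shows "card (expansions b S k) = card S ^ k"
proof -
  have "inj_on (\<lambda>\<sigma>. \<Sum>j<k. \<sigma> j * int b ^ j) ({..<k} \<rightarrow>\<^sub>E S)"
  proof (rule inj_onI)
    fix \<sigma> \<tau> assume st: "\<sigma> \<in> {..<k} \<rightarrow>\<^sub>E S" "\<tau> \<in> {..<k} \<rightarrow>\<^sub>E S"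
      and eq: "(\<Sum>j<k. \<sigma> j * int b ^ j) = (\<Sum>j<k. \<tau> j * int b ^ j)"
    have "\<forall>j<k. \<sigma> j = \<tau> j"
      using st by (intro digit_expansion_unique[OF assms(1,3) _ _ eq]) (auto simp: PiE_iff)
    then show "\<sigma> = \<tau>" using st by (intro PiE_ext) auto
  qed
  then show ?thesis
    using assms by (simp add: expansions_def card_image card_PiE)
qed

lemma expansions_diff_mem_digit_set:
  assumes "{s - s' | s s'. s \<in> S \<and> s' \<in> S} \<subseteq> D"
    and "p \<in> expansions b S k" "q \<in> expansions b S k" "p \<noteq> q"
  shows "p - q \<in> digit_set b D"
proof -
  obtain \<sigma> \<tau> where st: "\<sigma> \<in> {..<k} \<rightarrow>\<^sub>E S" "\<tau> \<in> {..<k} \<rightarrow>\<^sub>E S"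
    and p: "p = (\<Sum>j<k. \<sigma> j * int b ^ j)" and q: "q = (\<Sum>j<k. \<tau> j * int b ^ j)"
    using assms(2,3) by (auto simp: expansions_def)
  obtain k' where k': "k = Suc k'" using \<open>p \<noteq> q\<close> p q by (cases k) auto
  have "p - q = (\<Sum>j\<le>k'. (\<sigma> j - \<tau> j) * int b ^ j)"
    by (simp add: p q k' lessThan_Suc_atMost sum_subtractf left_diff_distrib)
  moreover have "\<forall>j\<le>k'. \<sigma> j - \<tau> j \<in> D"
    using st assms(1) k' by (fastforce simp: PiE_iff)
  ultimately show ?thesis
    unfolding digit_set_def by (intro CollectI exI[of _ k'] exI[of _ "\<lambda>j. \<sigma> j - \<tau> j"]) simp
qed

lemma sum_power_le_power_minus_1:
  fixes b :: int
  assumes "b \<ge> 2"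
  shows "(\<Sum>j<k. b ^ j) \<le> b ^ k - 1"
proof -
  have "0 \<le> (\<Sum>j<k. b ^ j)" using assms by (simp add: sum_nonneg)
  then have "(\<Sum>j<k. b ^ j) \<le> (b - 1) * (\<Sum>j<k. b ^ j)"
    using assms mult_right_mono[of 1 "b - 1"] by simp
  also have "\<dots> = b ^ k - 1" by (simp add: power_diff_1_eq)
  finally show ?thesis .
qed

lemma abs_expansions_le:
  assumes "b \<ge> 2" "B \<ge> 0" "\<forall>s\<in>S. \<bar>s\<bar> \<le> B" "p \<in> expansions b S k"
  shows "\<bar>p\<bar> \<le> B * (int b ^ k - 1)"
proof -
  obtain \<sigma> where \<sigma>: "\<sigma> \<in> {..<k} \<rightarrow>\<^sub>E S" and p: "p = (\<Sum>j<k. \<sigma> j * int b ^ j)"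
    using assms(4) by (auto simp: expansions_def)
  have "\<bar>p\<bar> \<le> (\<Sum>j<k. \<bar>\<sigma> j\<bar> * int b ^ j)"
    unfolding p by (rule order_trans[OF sum_abs]) (simp add: abs_mult)
  also have "\<dots> \<le> (\<Sum>j<k. B * int b ^ j)"
    using \<sigma> assms(3) by (intro sum_mono mult_right_mono) (auto simp: PiE_iff)
  also have "\<dots> \<le> B * (int b ^ k - 1)"
    using assms(1,2) sum_power_le_power_minus_1[of "int b" k]
    by (simp add: sum_distrib_left[symmetric] mult_left_mono)
  finally show ?thesis .
qed

lemma complete_residue_system_inj_on:
  assumes "complete_residue_system b R"
  shows "inj_on (\<lambda>x. x mod int b) R"
  using assms unfolding complete_residue_system_def
  by (intro eq_card_imp_inj_on) auto

lemma exists_power_scale: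
  fixes b M N :: nat
  assumes "b \<ge> 2" "M \<ge> 1"
  shows "\<exists>k. (k = 0 \<or> M * b ^ k < N) \<and> N \<le> M * b ^ Suc k"
proof (cases "N \<le> M * b")
  case False
  have "M * b ^ 0 \<le> M * b" using assms(1) by simp
  with False have not_0: "\<not> N \<le> M * b ^ 0" by linarith
  have "N < 2 ^ N" by (rule less_exp)
  also have "\<dots> \<le> b ^ N" using assms(1) by (rule power_mono) simp
  also have "\<dots> \<le> M * b ^ N" using assms(2) by simp
  finally have "N \<le> M * b ^ N" by simp
  then obtain k where "\<not> N \<le> M * b ^ k" "N \<le> M * b ^ Suc k"
    using exists_least_lemma[of "\<lambda>k. N \<le> M * b ^ k", OF not_0] by blast
  then show ?thesis by (auto simp: not_le)
qed auto

lemma inverse_power_le_powr: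
  fixes x b C N :: real
  assumes "x \<ge> 1" "b > 1" "C > 0" "N > 0" "N \<le> C * b ^ Suc k"
  shows "1 / x ^ k \<le> (C * b) powr (ln x / ln b) * N powr (- (ln x / ln b))"
proof -
  define c where "c = ln x / ln b"
  have "c \<ge> 0" using assms(1,2) by (simp add: c_def)
  have "x ^ k = (b powr c) ^ k"
    using assms(1,2) by (simp add: c_def powr_def)
  also have "\<dots> = (b ^ k) powr c"
    using assms(2) by (simp add: powr_realpow[symmetric] powr_powr mult.commute)
  finally have xk: "x ^ k = (b ^ k) powr c" .
  have "N powr c \<le> (C * b * b ^ k) powr c"
    using assms \<open>c \<ge> 0\<close> by (intro powr_mono2) (auto simp: mult.assoc)
  also have "\<dots> = (C * b) powr c * x ^ k"
    using assms(2,3) by (simp add: xk powr_mult)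
  finally have "N powr c \<le> (C * b) powr c * x ^ k" .
  then show ?thesis
    using assms(1,4) by (simp add: c_def[symmetric] powr_minus divide_simps mult.commute)
qed

lemma digit_set_bounds_at_scale:
  assumes "b \<ge> 2" and "finite S" and "S \<noteq> {}" and "inj_on (\<lambda>s. s mod int b) S"
    and "{s - s' | s s'. s \<in> S \<and> s' \<in> S} \<subseteq> D"
    and "\<forall>s\<in>S. \<bar>s\<bar> \<le> int B" and "k = 0 \<or> 2 * B * b ^ k < N" and "N \<ge> 1"
  shows "vdc_T (digit_set b D) N \<le> 2 / real (card S ^ k)"
    and "inter_density (digit_set b D) N \<le> 2 / real (card S ^ k)"
proof -
  let ?P = "expansions b S k"
  have card: "card ?P = card S ^ k"
    using assms(1,2,4) by (intro card_expansions) auto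
  have fin: "finite ?P" and ne: "?P \<noteq> {}"
    using card assms(2,3) by (auto intro: card_ge_0_finite)
  have diff: "\<forall>p\<in>?P. \<forall>q\<in>?P. p \<noteq> q \<longrightarrow> p - q \<in> digit_set b D"
    using assms(5) by (blast intro: expansions_diff_mem_digit_set)
  have bound: "2 * (int B * (int b ^ k - 1)) < int N"
    using assms(7,8) by (cases "k = 0") (auto simp: right_diff_distrib simp flip: of_nat_power of_nat_mult)
  have diam: "\<forall>p\<in>?P. \<forall>q\<in>?P. \<bar>p - q\<bar> < int N"
  proof (intro ballI)
    fix p q assume "p \<in> ?P" "q \<in> ?P"
    then have "\<bar>p\<bar> \<le> int B * (int b ^ k - 1)" "\<bar>q\<bar> \<le> int B * (int b ^ k - 1)"
      using abs_expansions_le[OF assms(1) _ assms(6)] by auto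
    with bound show "\<bar>p - q\<bar> < int N" by linarith
  qed
  show "vdc_T (digit_set b D) N \<le> 2 / real (card S ^ k)"
    using vdc_T_le_inverse_card[OF fin ne diff diam] card
    by (simp add: divide_right_mono order_trans)
  show "inter_density (digit_set b D) N \<le> 2 / real (card S ^ k)"
    using inter_density_le_two_div_card[OF fin ne diff diam] card by simp
qed

theorem mainTheorem3:
  fixes b :: nat and R D S :: "int set"
  assumes "b \<ge> 3"
    and "complete_residue_system b R"
    and "D \<subseteq> R" and "2 \<le> card D" and "card D < b"
    and "S \<subseteq> R" and "card S > 1"
    and "{s - s' | s s'. s \<in> S \<and> s' \<in> S} \<subseteq> D"
  shows "\<exists>K > 0. \<forall>N \<ge> 1.
           vdc_T (digit_set b D) N \<le> K * real N powr (- (ln (real (card S)) / ln (real b))) \<and>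
           inter_density (digit_set b D) N \<le> K * real N powr (- (ln (real (card S)) / ln (real b)))"
proof -
  have b: "b \<ge> 2" using assms(1) by simp
  have S: "finite S" "S \<noteq> {}" using assms(7) by (auto intro: card_ge_0_finite)
  have res: "inj_on (\<lambda>s. s mod int b) S"
    using complete_residue_system_inj_on[OF assms(2)] assms(6) by (rule inj_on_subset)
  obtain B :: nat where B: "B \<ge> 1" "\<forall>s\<in>S. \<bar>s\<bar> \<le> int B"
  proof
    have "\<bar>s\<bar> \<le> Max (abs ` S)" if "s \<in> S" for s using S(1) that by simp
    then show "\<forall>s\<in>S. \<bar>s\<bar> \<le> int (nat (Max (abs ` S)) + 1)" by fastforce
  qed simp
  define c where "c = ln (real (card S)) / ln (real b)"
  define K where "K = 2 * (real (2 * B) * real b) powr c"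
  have "vdc_T (digit_set b D) N \<le> K * real N powr - c \<and>
        inter_density (digit_set b D) N \<le> K * real N powr - c" if N: "N \<ge> 1" for N
  proof -
    obtain k where k: "k = 0 \<or> 2 * B * b ^ k < N" "N \<le> 2 * B * b ^ Suc k"
      using exists_power_scale[of b "2 * B" N] b B(1) by auto
    have "real N \<le> real (2 * B) * real b ^ Suc k"
      using k(2) by (simp flip: of_nat_power of_nat_mult)
    then have "1 / real (card S) ^ k \<le> (real (2 * B) * real b) powr c * real N powr - c"
      unfolding c_def using assms(7) b B(1) N by (intro inverse_power_le_powr) auto
    then have "2 / real (card S ^ k) \<le> K * real N powr - c"
      by (simp add: K_def)
    with digit_set_bounds_at_scale[OF b S res assms(8) B(2) k(1) N] show ?thesis
      by linarith
  qed
  moreover have "K > 0" using B(1) b by (simp add: K_def)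
  ultimately show ?thesis unfolding c_def by blast
qed

end
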